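(* In the setting described in the context, let $G\in R_w$ and $H\in R_z$ ($w,z\in\mathbb{Z}^{n-1}_{\ge0}$) be coprime polynomials. If $G$ is not divisible by any monomial (of positive degree), then for every $i\in M$ one has $G\,R_{z+i}+H\,R_{w+i}=R_{w+z+i}$.
   Context: Let $\mathbb{K}$ be a field. A Newton polyhedron is the convex hull of $S+\mathbb{R}^n_{\ge0}$ for a nonempty finite $S\subset\mathbb{Z}^n_{\ge0}$; for $\xi\in\mathbb{R}^n_{\ge0}$ the face $\Delta^\xi=\{a\in\Delta:\langle\xi,a\rangle=\min_{b\in\Delta}\langle\xi,b\rangle\}$ is compact iff $\xi\in\mathbb{R}^n_{>0}$; a loose edge is a compact 1-dimensional face not contained in any compact face of dimension $\ge2$. Let $\Delta$ be a Newton polyhedron with a loose edge $E$, let $c\in\mathbb{Z}^n$ be a primitive lattice vector parallel to $E$, and let $\xi_1,\dots,\xi_{n-1}\in\mathbb{Z}^n_{\ge0}$ be linearly independent vectors with $\langle\xi_i,c\rangle=0$. For $\alpha\in\mathbb{Z}^n$ put $\omega(\underline x^\alpha)=(\langle\xi_1,\alpha\rangle,\dots,\langle\xi_{n-1},\alpha\rangle)$. For $w\in\mathbb{Z}^{n-1}_{\ge0}$ let $R_w\subset\mathbb{K}[x_1,\dots,x_n]$ be the $\mathbb{K}$-span of monomials $\underline x^\alpha$, $\alpha\in\mathbb{Z}^n_{\ge0}$, with $\omega(\underline x^\alpha)=w$. Let $M$ be the set of $z\in\mathbb{Z}^{n-1}_{\ge0}$ for which there is $\alpha\in\mathbb{Z}^n$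 with $\omega(\underline x^\alpha)=z$ and $\langle\xi,\alpha\rangle\ge0$ for all $\xi\in\mathbb{R}^n_{\ge0}$ orthogonal to $E$. *)

theory Defs
  imports "HOL-Analysis.Analysis" "HOL-Library.Poly_Mapping"
begin

text \<open>Variables x_1..x_n are indexed by a finite type 'n (n = CARD('n)).  Vectors in Z^(n-1) are functions nat \<Rightarrow> int which vanish
  at indices \<ge> n - 1.\<close>

type_synonym ('n, 'a) mpoly = "('n \<Rightarrow>\<^sub>0 nat) \<Rightarrow>\<^sub>0 'a"

definition realvec :: "('n::finite \<Rightarrow> int) \<Rightarrow> real^'n" where
  "realvec a = (\<chi> i. real_of_int (a i))"

definition idot :: "('n::finite \<Rightarrow> int) \<Rightarrow> ('n \<Rightarrow> int) \<Rightarrow> int" where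
  "idot a b = (\<Sum>i\<in>UNIV. a i * b i)"

definition newton_polyhedron :: "('n::finite \<Rightarrow> nat) set \<Rightarrow> (real^'n) set" where
  "newton_polyhedron S =
     convex hull {(\<chi> i. real (s i)) + v | s v. s \<in> S \<and> (\<forall>i. 0 \<le> v $ i)}"

definition is_newton_polyhedron :: "(real^'n::finite) set \<Rightarrow> bool" where
  "is_newton_polyhedron D \<longleftrightarrow> (\<exists>S. finite S \<and> S \<noteq> {} \<and> D = newton_polyhedron S)"

definition loose_edge :: "(real^'n::finite) set \<Rightarrow> (real^'n) set \<Rightarrow> bool" where
  "loose_edge D E \<longleftrightarrow> E face_of D \<and> compact E \<and> aff_dim E = 1 \<and>
     (\<forall>F. F face_of D \<and> compact F \<and> aff_dim F \<ge> 2 \<longrightarrow> \<not> E \<subseteq> F)"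

definition primitive_vec :: "('n::finite \<Rightarrow> int) \<Rightarrow> bool" where
  "primitive_vec c \<longleftrightarrow> c \<noteq> (\<lambda>_. 0) \<and>
     (\<forall>k d. (\<forall>i. c i = k * d i) \<longrightarrow> \<bar>k\<bar> = 1)"

definition parallel_to :: "('n::finite \<Rightarrow> int) \<Rightarrow> (real^'n) set \<Rightarrow> bool" where
  "parallel_to c E \<longleftrightarrow> (\<exists>a\<in>E. \<exists>b\<in>E. a \<noteq> b \<and> (\<exists>t::real. realvec c = t *\<^sub>R (b - a)))"

definition orth_to :: "real^'n::finite \<Rightarrow> (real^'n) set \<Rightarrow> bool" where
  "orth_to \<xi> E \<longleftrightarrow> (\<forall>a\<in>E. \<forall>b\<in>E. \<xi> \<bullet> (b - a) = 0)"

definition lin_indep_family :: "nat \<Rightarrow> (nat \<Rightarrow> ('n::finite \<Rightarrow> int)) \<Rightarrow> bool" where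
  "lin_indep_family m xi \<longleftrightarrow>
     (\<forall>r::nat \<Rightarrow> real. (\<Sum>i<m. r i *\<^sub>R realvec (xi i)) = 0 \<longrightarrow> (\<forall>i<m. r i = 0))"

definition omega :: "(nat \<Rightarrow> ('n::finite \<Rightarrow> int)) \<Rightarrow> ('n \<Rightarrow> int) \<Rightarrow> (nat \<Rightarrow> int)" where
  "omega xi \<alpha> = (\<lambda>i. if i < CARD('n) - 1 then idot (xi i) \<alpha> else 0)"

definition nonneg_wvec :: "'n::finite itself \<Rightarrow> (nat \<Rightarrow> int) \<Rightarrow> bool" where
  "nonneg_wvec _ w \<longleftrightarrow> (\<forall>i. 0 \<le> w i) \<and> (\<forall>i. CARD('n) - 1 \<le> i \<longrightarrow> w i = 0)"

definition Rw :: "(nat \<Rightarrow> ('n::finite \<Rightarrow> int)) \<Rightarrow> (nat \<Rightarrow> int) \<Rightarrow> ('n, 'a::zero) mpoly set" where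
  "Rw xi w = {p. \<forall>m\<in>Poly_Mapping.keys p. omega xi (\<lambda>j. int (Poly_Mapping.lookup m j)) = w}"

definition Mset :: "(nat \<Rightarrow> ('n::finite \<Rightarrow> int)) \<Rightarrow> (real^'n) set \<Rightarrow> (nat \<Rightarrow> int) set" where
  "Mset xi E = {z. nonneg_wvec TYPE('n) z \<and>
     (\<exists>\<alpha>::'n \<Rightarrow> int. omega xi \<alpha> = z \<and>
        (\<forall>\<xi>::real^'n. (\<forall>j. 0 \<le> \<xi> $ j) \<and> orth_to \<xi> E \<longrightarrow> 0 \<le> \<xi> \<bullet> realvec \<alpha>))}"

definition mp_coprime :: "('n, 'a::field) mpoly \<Rightarrow> ('n, 'a) mpoly \<Rightarrow> bool" where
  "mp_coprime a b \<longleftrightarrow> (\<forall>c. c dvd a \<longrightarrow> c dvd b \<longrightarrow> c dvd 1)"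

end

theory Submission
  imports Defs "HOL-Computational_Algebra.Polynomial"
begin

(* Linear independence of the \<xi>'s and primitivity of c make the fibres of \<omega>
   on \<int>\<^sup>n exactly the lattice lines b + \<int>c.  Hence an element of R_v is a univariate
   polynomial p read along such a line, \<Sum>\<^sub>s p\<^sub>s x^(b+sc); products of such line polynomials
   are line polynomials of the products, and moving the base point along the line multiplies p
   by a power of t.  As G has no monomial factor, its base point is forced, G corresponds to a
   univariate g with g(0) \<noteq> 0, and coprimality of G and H passes to g and h (units are
   detected through the substitution x\<^sub>j \<mapsto> t^(max 0 c\<^sub>j)).  For X in R_(w+z+i), a Bezout
   identity t^k q = g a + t^l h b with deg b < deg g gives the required A and B; the hypothesis
   i \<in> M supplies a point \<alpha> + \<tau>c \<ge> 0 of the fibre of i, which keeps every exponent that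
   occurs in A and B nonnegative. *)

definition nonneg_vec :: "('n \<Rightarrow> int) \<Rightarrow> bool" where
  "nonneg_vec b \<longleftrightarrow> (\<forall>j. 0 \<le> b j)"

definition exponent_vec :: "('n \<Rightarrow>\<^sub>0 nat) \<Rightarrow> 'n \<Rightarrow> int" where
  "exponent_vec k = (\<lambda>j. int (Poly_Mapping.lookup k j))"

definition monomial_of :: "('n::finite \<Rightarrow> int) \<Rightarrow> 'n \<Rightarrow>\<^sub>0 nat" where
  "monomial_of b = Abs_poly_mapping (\<lambda>j. nat (b j))"

definition line_point :: "('n \<Rightarrow> int) \<Rightarrow> ('n \<Rightarrow> int) \<Rightarrow> int \<Rightarrow> 'n \<Rightarrow> int" where
  "line_point c b s = (\<lambda>j. b j + s * c j)"

definition pos_weight :: "('n::finite \<Rightarrow> int) \<Rightarrow> ('n \<Rightarrow> int) \<Rightarrow> int" where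
  "pos_weight c b = (\<Sum>j\<in>UNIV. max 0 (c j) * b j)"

text \<open>The least nonnegative vector \<open>b\<close> for which \<open>b + d c\<close> is nonnegative as well.\<close>
definition low_corner :: "('n \<Rightarrow> int) \<Rightarrow> nat \<Rightarrow> 'n \<Rightarrow> int" where
  "low_corner c d = (\<lambda>j. int d * max 0 (- c j))"

lemma lookup_monomial_of [simp]: "Poly_Mapping.lookup (monomial_of b) = (\<lambda>j. nat (b j))"
  by (simp add: monomial_of_def)

lemma monomial_of_exponent_vec [simp]: "monomial_of (exponent_vec k) = k"
  by (rule poly_mapping_eqI) (simp add: exponent_vec_def)

lemma exponent_vec_monomial_of: "nonneg_vec b \<Longrightarrow> exponent_vec (monomial_of b) = b"
  by (auto simp: exponent_vec_def nonneg_vec_def fun_eq_iff)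

lemma nonneg_exponent_vec [simp]: "nonneg_vec (exponent_vec k)"
  by (simp add: nonneg_vec_def exponent_vec_def)

lemma exponent_vec_add: "exponent_vec (k + l) = (\<lambda>j. exponent_vec k j + exponent_vec l j)"
  by (simp add: exponent_vec_def lookup_add fun_eq_iff)

lemma monomial_of_add:
  "nonneg_vec a \<Longrightarrow> nonneg_vec b \<Longrightarrow> monomial_of (\<lambda>j. a j + b j) = monomial_of a + monomial_of b"
  by (rule poly_mapping_eqI) (simp add: lookup_add nonneg_vec_def nat_add_distrib)

lemma monomial_of_inj:
  "nonneg_vec a \<Longrightarrow> nonneg_vec b \<Longrightarrow> monomial_of a = monomial_of b \<Longrightarrow> a = b"
  by (metis exponent_vec_monomial_of)

lemma monomial_of_zero [simp]: "monomial_of (\<lambda>_. 0) = 0"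
  by (rule poly_mapping_eqI) simp

lemma line_point_0 [simp]: "line_point c b 0 = b"
  by (simp add: line_point_def fun_eq_iff)

lemma line_point_line_point [simp]: "line_point c (line_point c b s) t = line_point c b (s + t)"
  by (simp add: line_point_def fun_eq_iff algebra_simps)

lemma pos_weight_line_point: "pos_weight c (line_point c b s) = pos_weight c b + s * pos_weight c c"
  by (simp add: pos_weight_def line_point_def sum.distrib algebra_simps sum_distrib_left)

lemma pos_weight_nonneg: "nonneg_vec b \<Longrightarrow> 0 \<le> pos_weight c b"
  unfolding pos_weight_def nonneg_vec_def by (intro sum_nonneg) simp

lemma pos_weight_self_nonneg: "0 \<le> pos_weight c c"
  unfolding pos_weight_def by (intro sum_nonneg) (simp add: max_def)

lemma nonneg_low_corner: "nonneg_vec (low_corner c d)"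
  by (simp add: nonneg_vec_def low_corner_def)

lemma low_corner_add: "low_corner c (d + e) = (\<lambda>j. low_corner c d j + low_corner c e j)"
  by (simp add: low_corner_def fun_eq_iff algebra_simps)

lemma nonneg_line_point_between:
  assumes "nonneg_vec b" "nonneg_vec (line_point c b N)" "0 \<le> s" "s \<le> N"
  shows "nonneg_vec (line_point c b s)"
  unfolding nonneg_vec_def line_point_def
proof
  fix j
  have ends: "0 \<le> b j" "0 \<le> b j + N * c j"
    using assms(1,2) by (auto simp: nonneg_vec_def line_point_def)
  show "0 \<le> b j + s * c j"
  proof (cases "c j < 0")
    case True
    then have "N * c j \<le> s * c j"
      using assms(4) by (simp add: mult_right_mono_neg)
    with ends show ?thesis by linarith
  qed (use ends assms(3) in simp)
qed

lemma nonneg_line_point_diff_low_corner: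
  assumes "nonneg_vec b" "nonneg_vec (line_point c b (int (d + s)))"
  shows "nonneg_vec (line_point c (\<lambda>j. b j - low_corner c d j) (int s))"
  unfolding nonneg_vec_def
proof
  fix j
  have "0 \<le> b j" "0 \<le> b j + (int d + int s) * c j"
    using assms by (auto simp: nonneg_vec_def line_point_def)
  then show "0 \<le> line_point c (\<lambda>j. b j - low_corner c d j) (int s) j"
    by (cases "c j < 0") (auto simp: line_point_def low_corner_def algebra_simps)
qed

lemma omega_add: "omega xi (\<lambda>j. a j + b j) = (\<lambda>k. omega xi a k + omega xi b k)"
  by (auto simp: omega_def idot_def sum.distrib algebra_simps fun_eq_iff)

lemma omega_diff: "omega xi (\<lambda>j. a j - b j) = (\<lambda>k. omega xi a k - omega xi b k)"
  by (auto simp: omega_def idot_def sum_subtractf algebra_simps fun_eq_iff)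

lemma Rw_iff: "P \<in> Rw xi v \<longleftrightarrow> (\<forall>k\<in>Poly_Mapping.keys P. omega xi (exponent_vec k) = v)"
  by (simp add: Rw_def exponent_vec_def)

lemma Rw_zero [simp]: "0 \<in> Rw xi v"
  by (simp add: Rw_iff)

lemma Rw_add: "P \<in> Rw xi v \<Longrightarrow> Q \<in> Rw xi v \<Longrightarrow> P + Q \<in> Rw xi v"
  unfolding Rw_iff using keys_add[of P Q] by blast

lemma Rw_mult:
  fixes P Q :: "('n::finite, 'a::comm_semiring_1) mpoly"
  assumes "P \<in> Rw xi a" "Q \<in> Rw xi b"
  shows "P * Q \<in> Rw xi (\<lambda>j. a j + b j)"
  unfolding Rw_iff
proof
  fix k assume "k \<in> Poly_Mapping.keys (P * Q)"
  then obtain k1 k2 where "k = k1 + k2" "k1 \<in> Poly_Mapping.keys P" "k2 \<in> Poly_Mapping.keys Q"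
    using keys_mult by blast
  with assms show "omega xi (exponent_vec k) = (\<lambda>j. a j + b j)"
    by (simp add: Rw_iff exponent_vec_add omega_add)
qed

lemma Rw_unique: "P \<in> Rw xi a \<Longrightarrow> P \<in> Rw xi b \<Longrightarrow> P \<noteq> 0 \<Longrightarrow> a = b"
  unfolding Rw_iff by (metis all_not_in_conv keys_eq_empty)

lemma Rw_single_0: "Poly_Mapping.single 0 a \<in> Rw xi (\<lambda>_. 0)"
  by (simp add: Rw_iff exponent_vec_def omega_def idot_def fun_eq_iff)

lemma combination_in_Rw:
  fixes G H A B :: "('n::finite, 'a::comm_semiring_1) mpoly"
  assumes "G \<in> Rw xi w" "H \<in> Rw xi z" "A \<in> Rw xi (\<lambda>j. z j + i j)" "B \<in> Rw xi (\<lambda>j. w j + i j)"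
  shows "G * A + H * B \<in> Rw xi (\<lambda>j. w j + z j + i j)"
proof -
  have "G * A \<in> Rw xi (\<lambda>j. w j + (z j + i j))" "H * B \<in> Rw xi (\<lambda>j. z j + (w j + i j))"
    using assms by (simp_all add: Rw_mult)
  moreover have "(\<lambda>j. w j + (z j + i j)) = (\<lambda>j. w j + z j + i j)"
    "(\<lambda>j. z j + (w j + i j)) = (\<lambda>j. w j + z j + i j)"
    by (simp_all add: fun_eq_iff algebra_simps)
  ultimately show ?thesis
    by (simp add: Rw_add)
qed

lemma combination_exists_unit:
  fixes G H X :: "('n::finite, 'a::field) mpoly"
  assumes "G = Poly_Mapping.single 0 a" "a \<noteq> 0" "G \<in> Rw xi w" "X \<in> Rw xi (\<lambda>j. w j + z j + i j)"
  shows "\<exists>A B. A \<in> Rw xi (\<lambda>j. z j + i j) \<and> B \<in> Rw xi (\<lambda>j. w j + i j) \<and> X = G * A + H * B"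
proof -
  define A where "A = Poly_Mapping.single 0 (inverse a) * X"
  have "G \<noteq> 0"
    using assms(1,2) by (metis lookup_single_eq lookup_zero)
  then have "w = (\<lambda>_. 0)"
    using Rw_unique[OF assms(3)] Rw_single_0 assms(1) by blast
  moreover have "A \<in> Rw xi (\<lambda>j. 0 + (w j + z j + i j))"
    unfolding A_def using Rw_single_0 assms(4) by (rule Rw_mult)
  ultimately have "A \<in> Rw xi (\<lambda>j. z j + i j)"
    by simp
  moreover have "X = G * A + H * 0"
    using assms(1,2) by (simp add: A_def mult.assoc[symmetric] mult_single)
  ultimately show ?thesis
    using Rw_zero by blast
qed

lemma sum_single_lookup: "(\<Sum>k\<in>Poly_Mapping.keys P. Poly_Mapping.single k (Poly_Mapping.lookup P k)) = P"
proof (rule poly_mapping_eqI)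
  fix x
  show "Poly_Mapping.lookup (\<Sum>k\<in>Poly_Mapping.keys P. Poly_Mapping.single k (Poly_Mapping.lookup P k)) x
      = Poly_Mapping.lookup P x"
    by (cases "x \<in> Poly_Mapping.keys P") (auto simp: lookup_sum lookup_single when_def in_keys_iff)
qed

definition monomial_weight :: "('n::finite \<Rightarrow> int) \<Rightarrow> ('n \<Rightarrow>\<^sub>0 nat) \<Rightarrow> nat" where
  "monomial_weight c k = (\<Sum>j\<in>UNIV. nat (c j) * Poly_Mapping.lookup k j)"

text \<open>The ring homomorphism \<open>x\<^sub>j \<mapsto> t ^ max 0 (c j)\<close> into univariate polynomials.\<close>
definition weight_poly :: "('n::finite \<Rightarrow> int) \<Rightarrow> ('n, 'a::comm_semiring_1) mpoly \<Rightarrow> 'a poly" where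
  "weight_poly c P = (\<Sum>k\<in>Poly_Mapping.keys P. monom (Poly_Mapping.lookup P k) (monomial_weight c k))"

lemma monomial_weight_add: "monomial_weight c (k + l) = monomial_weight c k + monomial_weight c l"
  by (simp add: monomial_weight_def lookup_add algebra_simps sum.distrib)

lemma monomial_weight_monomial_of:
  assumes "nonneg_vec b"
  shows "monomial_weight c (monomial_of b) = nat (pos_weight c b)"
proof -
  have "int (monomial_weight c (monomial_of b)) = pos_weight c b"
    using assms by (simp add: monomial_weight_def pos_weight_def nonneg_vec_def of_nat_sum max_def)
  then show ?thesis by linarith
qed

lemma weight_poly_eq_sum:
  assumes "finite K" "Poly_Mapping.keys P \<subseteq> K"
  shows "weight_poly c P = (\<Sum>k\<in>K. monom (Poly_Mapping.lookup P k) (monomial_weight c k))"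
  unfolding weight_poly_def
  by (rule sum.mono_neutral_left) (use assms in \<open>auto simp: in_keys_iff\<close>)

lemma weight_poly_add: "weight_poly c (P + Q) = weight_poly c P + weight_poly c Q"
proof -
  let ?K = "Poly_Mapping.keys P \<union> Poly_Mapping.keys Q"
  have "weight_poly c (P + Q) = (\<Sum>k\<in>?K. monom (Poly_Mapping.lookup (P + Q) k) (monomial_weight c k))"
    by (rule weight_poly_eq_sum) (simp_all add: keys_add)
  also have "\<dots> = weight_poly c P + weight_poly c Q"
    by (simp add: weight_poly_eq_sum[of ?K] lookup_add add_monom[symmetric] sum.distrib)
  finally show ?thesis .
qed

lemma weight_poly_0 [simp]: "weight_poly c 0 = 0"
  by (simp add: weight_poly_def)

lemma weight_poly_sum: "weight_poly c (\<Sum>i\<in>I. f i) = (\<Sum>i\<in>I. weight_poly c (f i))"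
  by (induction I rule: infinite_finite_induct) (auto simp: weight_poly_add)

lemma weight_poly_single: "weight_poly c (Poly_Mapping.single k a) = monom a (monomial_weight c k)"
  by (cases "a = 0") (auto simp: weight_poly_def)

lemma weight_poly_mult: "weight_poly c (P * Q) = weight_poly c P * weight_poly c Q"
proof -
  have "weight_poly c (P * Q) = weight_poly c
      ((\<Sum>k\<in>Poly_Mapping.keys P. Poly_Mapping.single k (Poly_Mapping.lookup P k)) *
       (\<Sum>l\<in>Poly_Mapping.keys Q. Poly_Mapping.single l (Poly_Mapping.lookup Q l)))"
    by (simp only: sum_single_lookup)
  also have "\<dots> = (\<Sum>k\<in>Poly_Mapping.keys P. \<Sum>l\<in>Poly_Mapping.keys Q.
      monom (Poly_Mapping.lookup P k * Poly_Mapping.lookup Q l) (monomial_weight c k + monomial_weight c l))"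
    by (simp add: sum_product mult_single weight_poly_sum weight_poly_single monomial_weight_add)
  also have "\<dots> = weight_poly c P * weight_poly c Q"
    by (simp add: weight_poly_def sum_product mult_monom)
  finally show ?thesis .
qed

lemma weight_poly_one [simp]: "weight_poly c 1 = 1"
  by (simp add: weight_poly_def monomial_weight_def)

lemma weight_poly_dvd_one: "P dvd 1 \<Longrightarrow> weight_poly c P dvd 1"
  by (metis dvd_def weight_poly_mult weight_poly_one)

text \<open>Negative
  entries of \<open>b + s c\<close> are truncated by \<open>monomial_of\<close>; \<open>line_admissible\<close> rules this out.\<close>
definition line_poly :: "('n::finite \<Rightarrow> int) \<Rightarrow> ('n \<Rightarrow> int) \<Rightarrow> 'a::comm_monoid_add poly \<Rightarrow> ('n, 'a) mpoly"
  where "line_poly c b p =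
    (\<Sum>s\<le>degree p. Poly_Mapping.single (monomial_of (line_point c b (int s))) (coeff p s))"

definition line_admissible :: "('n \<Rightarrow> int) \<Rightarrow> ('n \<Rightarrow> int) \<Rightarrow> 'a::zero poly \<Rightarrow> bool" where
  "line_admissible c b p \<longleftrightarrow> (p \<noteq> 0 \<longrightarrow> (\<forall>s\<le>degree p. nonneg_vec (line_point c b (int s))))"

lemma line_poly_eq_sum:
  assumes "degree p \<le> N"
  shows "line_poly c b p = (\<Sum>s\<le>N. Poly_Mapping.single (monomial_of (line_point c b (int s))) (coeff p s))"
  unfolding line_poly_def
  by (rule sum.mono_neutral_left) (use assms in \<open>auto simp: coeff_eq_0\<close>)

lemma line_poly_0 [simp]: "line_poly c b 0 = 0"
  by (simp add: line_poly_def)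

lemma line_poly_add: "line_poly c b (p + q) = line_poly c b p + line_poly c b q"
proof -
  define N where "N = max (degree p) (degree q)"
  have "degree (p + q) \<le> N" "degree p \<le> N" "degree q \<le> N"
    unfolding N_def by (simp_all add: degree_add_le)
  then show ?thesis
    by (simp add: line_poly_eq_sum[of _ N] sum.distrib single_add)
qed

lemma line_poly_sum: "line_poly c b (\<Sum>i\<in>I. f i) = (\<Sum>i\<in>I. line_poly c b (f i))"
  by (induction I rule: infinite_finite_induct) (auto simp: line_poly_add)

lemma line_poly_monom:
  "line_poly c b (monom a s) = Poly_Mapping.single (monomial_of (line_point c b (int s))) a"
  by (simp add: line_poly_eq_sum[of _ s] degree_monom_le coeff_monom if_distrib[where f = "Poly_Mapping.single _"]
      sum.delta cong: if_cong)

lemma line_poly_shift: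
  fixes p :: "'a::comm_semiring_1 poly"
  shows "line_poly c (line_point c b (int k)) p = line_poly c b (monom 1 k * p)"
proof -
  have "monom 1 k * p = monom 1 k * (\<Sum>s\<le>degree p. monom (coeff p s) s)"
    by (simp only: poly_as_sum_of_monoms)
  then have "line_poly c b (monom 1 k * p) = (\<Sum>s\<le>degree p. line_poly c b (monom (coeff p s) (k + s)))"
    by (simp add: sum_distrib_left mult_monom line_poly_sum)
  also have "\<dots> = line_poly c (line_point c b (int k)) p"
    by (simp add: line_poly_monom) (simp add: line_poly_def algebra_simps)
  finally show ?thesis ..
qed

lemma line_poly_mult:
  fixes p q :: "'a::comm_semiring_1 poly"
  assumes "line_admissible c a p" "line_admissible c b q"
  shows "line_poly c a p * line_poly c b q = line_poly c (\<lambda>j. a j + b j) (p * q)"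
proof (cases "p = 0 \<or> q = 0")
  case False
  have exps: "monomial_of (line_point c a (int s)) + monomial_of (line_point c b (int t))
      = monomial_of (line_point c (\<lambda>j. a j + b j) (int (s + t)))"
    if "s \<le> degree p" "t \<le> degree q" for s t
  proof -
    have "nonneg_vec (line_point c a (int s))" "nonneg_vec (line_point c b (int t))"
      using assms False that by (auto simp: line_admissible_def)
    then show ?thesis
      by (simp add: monomial_of_add[symmetric]) (simp add: line_point_def algebra_simps)
  qed
  have "p * q = (\<Sum>s\<le>degree p. monom (coeff p s) s) * (\<Sum>t\<le>degree q. monom (coeff q t) t)"
    by (simp only: poly_as_sum_of_monoms)
  then have "line_poly c (\<lambda>j. a j + b j) (p * q) =
      (\<Sum>s\<le>degree p. \<Sum>t\<le>degree q. line_poly c (\<lambda>j. a j + b j) (monom (coeff p s * coeff q t) (s + t)))"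
    by (simp add: sum_product mult_monom line_poly_sum)
  also have "\<dots> = (\<Sum>s\<le>degree p. \<Sum>t\<le>degree q. Poly_Mapping.single
      (monomial_of (line_point c (\<lambda>j. a j + b j) (int (s + t)))) (coeff p s * coeff q t))"
    by (simp only: line_poly_monom)
  also have "\<dots> = line_poly c a p * line_poly c b q"
    unfolding line_poly_def sum_product mult_single by (intro sum.cong refl) (simp add: exps)
  finally show ?thesis ..
qed auto

lemma line_admissibleI:
  "nonneg_vec b \<Longrightarrow> nonneg_vec (line_point c b (int N)) \<Longrightarrow> degree p \<le> N \<Longrightarrow> line_admissible c b p"
  unfolding line_admissible_def by (auto intro: nonneg_line_point_between)

lemma line_admissibleD:
  "line_admissible c b p \<Longrightarrow> p \<noteq> 0 \<Longrightarrow> nonneg_vec b \<and> nonneg_vec (line_point c b (int (degree p)))"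
  unfolding line_admissible_def by (metis line_point_0 of_nat_0 order_refl zero_le)

lemma line_admissible_low_corner: "degree p \<le> d \<Longrightarrow> line_admissible c (low_corner c d) p"
  by (rule line_admissibleI[of _ _ d])
    (auto simp: nonneg_low_corner nonneg_vec_def line_point_def low_corner_def max_def)

lemma line_admissible_factor:
  fixes p q :: "'a::idom poly"
  assumes "line_admissible c b (p * q)" "p \<noteq> 0"
  shows "line_admissible c (\<lambda>j. b j - low_corner c (degree p) j) q"
  unfolding line_admissible_def
proof (intro impI allI)
  fix s assume "q \<noteq> 0" "s \<le> degree q"
  with assms have "\<forall>t\<le>degree p + degree q. nonneg_vec (line_point c b (int t))"
    by (simp add: line_admissible_def degree_mult_eq)
  with \<open>s \<le> degree q\<close> have "nonneg_vec (line_point c b 0)" "nonneg_vec (line_point c b (int (degree p + s)))"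
    by (metis add_le_cancel_left of_nat_0 zero_le)+
  then show "nonneg_vec (line_point c (\<lambda>j. b j - low_corner c (degree p) j) (int s))"
    by (intro nonneg_line_point_diff_low_corner) simp_all
qed

text \<open>The exponent vector of the greatest monomial dividing every \<open>x ^ (b + s c)\<close>, \<open>s \<le> d\<close>.\<close>
definition segment_min :: "('n \<Rightarrow> int) \<Rightarrow> ('n \<Rightarrow> int) \<Rightarrow> nat \<Rightarrow> 'n \<Rightarrow> int" where
  "segment_min c b d = (\<lambda>j. min (b j) (line_point c b (int d) j))"

lemma segment_min_le:
  assumes "s \<le> d"
  shows "segment_min c b d j \<le> line_point c b (int s) j"
proof (cases "c j < 0")
  case True
  then have "int d * c j \<le> int s * c j"
    using assms by (simp add: mult_right_mono_neg)
  then show ?thesis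
    by (simp add: segment_min_def line_point_def)
qed (simp add: segment_min_def line_point_def)

lemma low_corner_if_segment_min_eq_0:
  assumes "segment_min c b d = (\<lambda>_. 0)"
  shows "b = low_corner c d"
proof
  fix j
  have min0: "min (b j) (b j + int d * c j) = 0"
    using fun_cong[OF assms, of j] by (simp add: segment_min_def line_point_def)
  show "b j = low_corner c d j"
  proof (cases "c j < 0")
    case True
    then have "int d * c j \<le> 0"
      by (simp add: mult_nonneg_nonpos)
    with min0 True show ?thesis
      by (simp add: low_corner_def min_def split: if_splits)
  next
    case False
    then have "0 \<le> int d * c j"
      by simp
    with min0 False show ?thesis
      by (simp add: low_corner_def min_def split: if_splits)
  qed
qed
lemma nonneg_segment_min:
  "line_admissible c b p \<Longrightarrow> p \<noteq> 0 \<Longrightarrow> nonneg_vec (segment_min c b (degree p))"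
  by (drule (1) line_admissibleD) (simp add: segment_min_def nonneg_vec_def)

lemma line_poly_monomial_factor:
  fixes p :: "'a::comm_semiring_1 poly"
  assumes "line_admissible c b p" "p \<noteq> 0"
  defines "m \<equiv> segment_min c b (degree p)"
  shows "line_poly c b p = Poly_Mapping.single (monomial_of m) 1 * line_poly c (\<lambda>j. b j - m j) p"
proof -
  have adm_m: "line_admissible c m 1"
    using nonneg_segment_min[OF assms(1,2)] by (simp add: m_def line_admissible_def)
  have adm_rest: "line_admissible c (\<lambda>j. b j - m j) p"
    unfolding line_admissible_def nonneg_vec_def
  proof (intro impI allI)
    fix s j assume "s \<le> degree p"
    then show "0 \<le> line_point c (\<lambda>j. b j - m j) (int s) j"
      using segment_min_le[of s "degree p" c b j] by (simp add: m_def line_point_def)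
  qed
  have "line_poly c m 1 = Poly_Mapping.single (monomial_of m) 1"
    using line_poly_monom[of c m 1 0] by (simp add: monom_0 one_pCons)
  moreover have "line_poly c m 1 * line_poly c (\<lambda>j. b j - m j) p = line_poly c b p"
    using line_poly_mult[OF adm_m adm_rest] by simp
  ultimately show ?thesis
    by metis
qed

lemma line_poly_bezout_identity:
  fixes g h q a b :: "'a::comm_semiring_1 poly"
  assumes "monom 1 k * q = g * a + monom 1 l * h * b"
    and "line_admissible c (\<lambda>j. \<rho> j - low_corner c (degree g) j) a"
    and "line_admissible c \<gamma> h" "line_admissible c \<beta> b"
    and "(\<lambda>j. \<gamma> j + \<beta> j) = line_point c \<rho> (int l)"
  shows "line_poly c (line_point c \<rho> (int k)) q
    = line_poly c (low_corner c (degree g)) g * line_poly c (\<lambda>j. \<rho> j - low_corner c (degree g) j) a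
      + line_poly c \<gamma> h * line_poly c \<beta> b"
proof -
  have "line_poly c (low_corner c (degree g)) g * line_poly c (\<lambda>j. \<rho> j - low_corner c (degree g) j) a
      = line_poly c \<rho> (g * a)"
    using line_poly_mult[OF line_admissible_low_corner[of g "degree g"] assms(2)] by simp
  moreover have "line_poly c \<gamma> h * line_poly c \<beta> b = line_poly c \<rho> (monom 1 l * h * b)"
    using line_poly_mult[OF assms(3,4)] by (simp add: assms(5) line_poly_shift mult.assoc)
  ultimately show ?thesis
    by (simp add: line_poly_shift assms(1) line_poly_add)
qed

lemma pcompose_monom_monom: "pcompose (monom a k) (monom 1 m) = monom (a::'a::comm_semiring_1) (k * m)"
proof (induction k)
  case (Suc k)
  have "pcompose (monom a (Suc k)) (monom 1 m) = pcompose (monom a k * monom 1 1) (monom 1 m)"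
    by (simp add: mult_monom)
  also have "\<dots> = monom a (Suc k * m)"
    by (simp add: pcompose_mult Suc monom_Suc pcompose_pCons monom_0 mult_monom add.commute)
  finally show ?case .
qed (simp add: monom_0)

lemma weight_poly_line_poly:
  assumes "line_admissible c b p"
  shows "weight_poly c (line_poly c b p)
    = monom 1 (nat (pos_weight c b)) * pcompose p (monom 1 (nat (pos_weight c c)))"
proof (cases "p = 0")
  case False
  have "monomial_weight c (monomial_of (line_point c b (int s)))
      = nat (pos_weight c b) + s * nat (pos_weight c c)" if "s \<le> degree p" for s
  proof -
    have "nonneg_vec b" "nonneg_vec (line_point c b (int s))"
      using assms False that by (auto simp: line_admissible_def elim!: allE[of _ 0])
    then show ?thesis
      using pos_weight_nonneg[of b c] pos_weight_self_nonneg[of c]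
      by (simp add: monomial_weight_monomial_of pos_weight_line_point nat_add_distrib nat_mult_distrib)
  qed
  then have "weight_poly c (line_poly c b p)
      = (\<Sum>s\<le>degree p. monom 1 (nat (pos_weight c b)) * pcompose (monom (coeff p s) s) (monom 1 (nat (pos_weight c c))))"
    unfolding line_poly_def weight_poly_sum weight_poly_single
    by (intro sum.cong refl) (simp add: pcompose_monom_monom mult_monom)
  also have "\<dots> = monom 1 (nat (pos_weight c b)) * pcompose p (monom 1 (nat (pos_weight c c)))"
    by (simp add: sum_distrib_left[symmetric] pcompose_sum[symmetric] poly_as_sum_of_monoms)
  finally show ?thesis .
qed simp

lemma coprime_imp_bezout:
  fixes g h :: "'a::euclidean_ring"
  assumes "coprime g h"
  shows "\<exists>u v. u * g + v * h = 1"
  using assms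
proof (induction h arbitrary: g rule: measure_induct_rule[of euclidean_size])
  case (less h)
  show ?case
  proof (cases "h = 0")
    case True
    with less.prems obtain k where "1 = g * k"
      by (auto elim: dvdE)
    then have "k * g + 0 * h = 1"
      by (simp add: mult.commute)
    then show ?thesis by blast
  next
    case False
    with less.prems have "coprime h (g mod h)"
      by (simp add: coprime_commute)
    with False less.IH obtain u v where "u * h + v * (g mod h) = 1"
      using mod_size_less by blast
    then have "v * g + (u - v * (g div h)) * h = 1"
      by (simp add: minus_div_mult_eq_mod[symmetric] algebra_simps)
    then show ?thesis by blast
  qed
qed

lemma coprime_if_bezout: "u * a + v * b = 1 \<Longrightarrow> coprime a b"
  by (rule coprimeI) (metis dvd_add dvd_mult)

lemma coprime_mult_right_euclidean:
  fixes a b c :: "'a::euclidean_ring"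
  assumes "coprime a b" "coprime a c"
  shows "coprime a (b * c)"
proof -
  obtain u v u' v' where "u * a + v * b = 1" "u' * a + v' * c = 1"
    using coprime_imp_bezout assms by metis
  then have "(u * a + v * b) * (u' * a + v' * c) = 1"
    by simp
  then have "(u * u' * a + u * v' * c + v * b * u') * a + (v * v') * (b * c) = 1"
    by (simp add: algebra_simps)
  then show ?thesis
    by (rule coprime_if_bezout)
qed

lemma coprime_monom_right:
  fixes g :: "'a::field poly"
  assumes "coeff g 0 \<noteq> 0"
  shows "coprime g (monom 1 k)"
proof (induction k)
  case (Suc k)
  obtain a g' where g: "g = pCons a g'"
    by (cases g)
  have "coprime g [:0, 1:]"
  proof (rule coprimeI)
    fix f assume "f dvd g" "f dvd [:0, 1:]"
    then have "f dvd g - [:0, 1:] * g'"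
      by (intro dvd_diff dvd_mult2)
    also have "g - [:0, 1:] * g' = [:a:]"
      by (simp add: g)
    finally show "is_unit f"
      using assms g is_unit_triv[of a] by (auto intro: dvd_unit_imp_unit)
  qed
  moreover have "monom (1::'a) 1 = [:0, 1:]"
    by (simp add: monom_Suc monom_0)
  ultimately have "coprime g (monom 1 k * monom 1 1)"
    using Suc coprime_mult_right_euclidean by metis
  then show ?case
    by (simp add: mult_monom)
qed (simp add: monom_0 one_pCons[symmetric])

lemma bezout_degree_bound:
  fixes g h q :: "'a::field poly"
  assumes "coprime g h" "g \<noteq> 0" "degree q \<le> N" "degree h + (degree g - 1) \<le> N"
  obtains a b where "q = g * a + h * b" "degree (g * a) \<le> N" "degree b \<le> degree g - 1"
proof -
  obtain u v where uv: "u * g + v * h = 1"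
    using coprime_imp_bezout assms(1) by blast
  define a where "a = q * u + h * ((q * v) div g)"
  define b where "b = (q * v) mod g"
  have "q = q * (u * g + v * h)"
    by (simp add: uv)
  also have "\<dots> = g * (q * u) + h * (q * v)"
    by (simp add: algebra_simps)
  also have "\<dots> = g * (q * u) + h * (g * ((q * v) div g) + (q * v) mod g)"
    by (simp only: mult_div_mod_eq)
  also have "\<dots> = g * a + h * b"
    by (simp only: a_def b_def distrib_left mult.left_commute[of h g] add.assoc)
  finally have q: "q = g * a + h * b" .
  have b: "degree b \<le> degree g - 1"
    using degree_mod_less[OF assms(2), of "q * v"] unfolding b_def by auto
  then have "degree (h * b) \<le> N"
    using degree_mult_le[of h b] assms(4) by linarith
  moreover have "g * a = q - h * b"
    using q by simp
  ultimately have "degree (g * a) \<le> N"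
    using degree_diff_le[OF assms(3)] by simp
  with q b show ?thesis
    using that by blast
qed

lemma bezout_shifted:
  fixes g h q :: "'a::field poly"
  assumes "coprime g h" "coeff g 0 \<noteq> 0" "h \<noteq> 0" "q \<noteq> 0"
  obtains a b where "monom 1 k * q = g * a + monom 1 l * h * b"
    "degree (g * a) \<le> max (k + degree q) (l + degree h + (degree g - 1))" "degree b \<le> degree g - 1"
proof -
  have "g \<noteq> 0"
    using assms(2) by auto
  have "coprime g (monom 1 l * h)"
    using assms(1) coprime_monom_right[OF assms(2)] by (simp add: coprime_mult_right_euclidean)
  moreover have "degree (monom 1 k * q) \<le> max (k + degree q) (l + degree h + (degree g - 1))"
    "degree (monom 1 l * h) + (degree g - 1) \<le> max (k + degree q) (l + degree h + (degree g - 1))"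
    using assms(3,4) by (simp_all add: degree_mult_eq degree_monom_eq)
  ultimately obtain a b where "monom 1 k * q = g * a + monom 1 l * h * b"
    "degree (g * a) \<le> max (k + degree q) (l + degree h + (degree g - 1))" "degree b \<le> degree g - 1"
    by (rule bezout_degree_bound[OF _ \<open>g \<noteq> 0\<close>])
  then show ?thesis
    by (rule that)
qed

lemma nonneg_ceiling_shift:
  fixes \<alpha> c :: "'n \<Rightarrow> int" and \<tau> :: real
  assumes "\<forall>j. 0 \<le> \<alpha> j + \<tau> * c j" "1 \<le> d"
  defines "\<beta> \<equiv> line_point c (\<lambda>j. \<alpha> j + low_corner c d j) \<lceil>\<tau>\<rceil>"
  shows "nonneg_vec \<beta>" and "nonneg_vec (line_point c \<beta> (int (d - 1)))"
proof -
  have real_bounds: "0 \<le> real_of_int (\<beta> j) \<and> 0 \<le> real_of_int (\<beta> j) + (real d - 1) * c j" for j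
  proof -
    have x: "0 \<le> \<alpha> j + \<tau> * c j" "\<tau> \<le> \<lceil>\<tau>\<rceil>" "\<lceil>\<tau>\<rceil> < \<tau> + 1"
      using assms(1) ceiling_correct[of \<tau>] by auto
    show ?thesis
    proof (cases "c j < 0")
      case True
      have "(\<tau> + 1) * c j \<le> real_of_int \<lceil>\<tau>\<rceil> * c j" "real d * c j \<le> 1 * real_of_int (c j)"
        using True x(3) assms(2) by (simp_all add: mult_right_mono_neg)
      moreover have "real_of_int (\<beta> j) = \<alpha> j - real d * c j + real_of_int \<lceil>\<tau>\<rceil> * c j"
        using True by (simp add: \<beta>_def line_point_def low_corner_def)
      moreover have "(\<tau> + 1) * c j = \<tau> * c j + c j" "(real d - 1) * c j = real d * c j - c j"
        by (simp_all add: algebra_simps)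
      ultimately show ?thesis
        using x(1) by linarith
    next
      case False
      have "\<tau> * c j \<le> real_of_int \<lceil>\<tau>\<rceil> * c j" "0 \<le> (real d - 1) * c j"
        using False x(2) assms(2) by (simp_all add: mult_right_mono)
      moreover have "real_of_int (\<beta> j) = real_of_int (\<alpha> j) + real_of_int \<lceil>\<tau>\<rceil> * c j"
        using False by (simp add: \<beta>_def line_point_def low_corner_def)
      ultimately show ?thesis
        using x(1) by linarith
    qed
  qed
  then show "nonneg_vec \<beta>"
    by (simp add: nonneg_vec_def)
  show "nonneg_vec (line_point c \<beta> (int (d - 1)))"
    unfolding nonneg_vec_def line_point_def
  proof
    fix j
    have "real_of_int (\<beta> j + int (d - 1) * c j) = real_of_int (\<beta> j) + (real d - 1) * c j"
      using assms(2) by (simp add: of_nat_diff)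
    then show "0 \<le> \<beta> j + int (d - 1) * c j"
      using real_bounds[of j] by linarith
  qed
qed

locale omega_lines =
  fixes c :: "'n::finite \<Rightarrow> int" and xi :: "nat \<Rightarrow> 'n \<Rightarrow> int"
  assumes omega_eq_iff: "omega xi a = omega xi b \<longleftrightarrow> (\<exists>s. b = line_point c a s)"
    and positive_entry: "\<exists>j. 0 < c j"
begin

lemma omega_line_point [simp]: "omega xi (line_point c b s) = omega xi b"
  using omega_eq_iff by metis

lemma line_point_inj: "line_point c b s = line_point c b t \<Longrightarrow> s = t"
proof -
  assume "line_point c b s = line_point c b t"
  moreover obtain j where "0 < c j"
    using positive_entry by blast
  ultimately show "s = t"
    by (auto simp: line_point_def dest: fun_cong[of _ _ j])
qed

lemma pos_weight_self_pos: "0 < pos_weight c c"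
proof -
  obtain j where j: "0 < c j"
    using positive_entry by blast
  have "max 0 (c j) * c j \<le> pos_weight c c"
    unfolding pos_weight_def by (rule member_le_sum) (auto simp: max_def)
  moreover have "0 < max 0 (c j) * c j"
    using j by simp
  ultimately show ?thesis by linarith
qed

lemma line_poly_in_Rw:
  assumes "line_admissible c b p"
  shows "line_poly c b p \<in> Rw xi (omega xi b)"
  unfolding Rw_iff
proof
  fix k assume "k \<in> Poly_Mapping.keys (line_poly c b p)"
  then obtain s where "s \<le> degree p"
      "k \<in> Poly_Mapping.keys (Poly_Mapping.single (monomial_of (line_point c b (int s))) (coeff p s))"
    unfolding line_poly_def by (blast dest: subsetD[OF keys_sum])
  then have s: "s \<le> degree p" "coeff p s \<noteq> 0" "k = monomial_of (line_point c b (int s))"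
    by (simp_all split: if_splits)
  then have "p \<noteq> 0"
    by auto
  with assms s have "nonneg_vec (line_point c b (int s))"
    by (simp add: line_admissible_def)
  with s show "omega xi (exponent_vec k) = omega xi b"
    by (simp add: exponent_vec_monomial_of)
qed

lemma degree_eq_0_if_line_poly_dvd_one:
  fixes p :: "'a::field poly"
  assumes "line_admissible c b p" "p \<noteq> 0" "line_poly c b p dvd 1"
  shows "degree p = 0"
proof -
  let ?m = "nat (pos_weight c c)"
  let ?q = "monom 1 (nat (pos_weight c b)) * pcompose p (monom 1 ?m)"
  have "0 < ?m"
    using pos_weight_self_pos by simp
  then have "?q \<noteq> 0" "degree ?q = nat (pos_weight c b) + degree p * ?m"
    using assms(2) by (simp_all add: pcompose_eq_0_iff degree_monom_eq degree_mult_eq degree_pcompose)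
  moreover have "?q dvd 1"
    using weight_poly_dvd_one[OF assms(3), of c] by (simp add: weight_poly_line_poly[OF assms(1)])
  ultimately have "nat (pos_weight c b) + degree p * ?m = 0"
    using is_unit_iff_degree by metis
  with \<open>0 < ?m\<close> show ?thesis
    by simp
qed

lemma Rw_keys_on_line:
  assumes "P \<in> Rw xi v" "k0 \<in> Poly_Mapping.keys P"
  defines "S \<equiv> line_point c (exponent_vec k0) -` (exponent_vec ` Poly_Mapping.keys P)"
  shows "finite S" and "0 \<in> S"
    and "Poly_Mapping.keys P = (\<lambda>s. monomial_of (line_point c (exponent_vec k0) s)) ` S"
proof -
  have "inj (line_point c (exponent_vec k0))"
    by (rule injI) (rule line_point_inj)
  then show "finite S"
    unfolding S_def by (simp add: finite_vimageI)
  show "0 \<in> S"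
    using assms(2) by (simp add: S_def)
  show "Poly_Mapping.keys P = (\<lambda>s. monomial_of (line_point c (exponent_vec k0) s)) ` S"
  proof
    show "Poly_Mapping.keys P \<subseteq> (\<lambda>s. monomial_of (line_point c (exponent_vec k0) s)) ` S"
    proof
      fix k assume k: "k \<in> Poly_Mapping.keys P"
      then have "omega xi (exponent_vec k0) = omega xi (exponent_vec k)"
        using assms(1,2) by (simp add: Rw_iff)
      then obtain s where s: "line_point c (exponent_vec k0) s = exponent_vec k"
        using omega_eq_iff by metis
      then have "s \<in> S"
        using k by (simp add: S_def)
      moreover have "k = monomial_of (line_point c (exponent_vec k0) s)"
        by (simp add: s)
      ultimately show "k \<in> (\<lambda>s. monomial_of (line_point c (exponent_vec k0) s)) ` S"
        by blast
    qed
    show "(\<lambda>s. monomial_of (line_point c (exponent_vec k0) s)) ` S \<subseteq> Poly_Mapping.keys P"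
    proof
      fix x assume "x \<in> (\<lambda>s. monomial_of (line_point c (exponent_vec k0) s)) ` S"
      then obtain s k where "k \<in> Poly_Mapping.keys P" "line_point c (exponent_vec k0) s = exponent_vec k"
        "x = monomial_of (line_point c (exponent_vec k0) s)"
        unfolding S_def by blast
      then show "x \<in> Poly_Mapping.keys P"
        by simp
    qed
  qed
qed

lemma Rw_keys_on_segment:
  assumes "P \<in> Rw xi v" "P \<noteq> 0"
  obtains b N where "nonneg_vec b" "nonneg_vec (line_point c b (int N))" "omega xi b = v"
    "monomial_of b \<in> Poly_Mapping.keys P"
    "Poly_Mapping.keys P \<subseteq> (\<lambda>s. monomial_of (line_point c b (int s))) ` {..N}"
proof -
  obtain k0 where k0: "k0 \<in> Poly_Mapping.keys P"
    using assms(2) by fastforce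
  define a where "a = exponent_vec k0"
  define S where "S = line_point c a -` (exponent_vec ` Poly_Mapping.keys P)"
  have S: "finite S" "S \<noteq> {}" and keys: "Poly_Mapping.keys P = (\<lambda>s. monomial_of (line_point c a s)) ` S"
    using Rw_keys_on_line[OF assms(1) k0] unfolding a_def S_def by blast+
  define b where "b = line_point c a (Min S)"
  define N where "N = nat (Max S - Min S)"
  have "line_point c b (int N) = line_point c a (Max S)"
    using S by (simp add: b_def N_def)
  then have "nonneg_vec b" "nonneg_vec (line_point c b (int N))"
    using Min_in[OF S] Max_in[OF S] by (auto simp: b_def S_def)
  moreover have "omega xi b = v"
    using assms(1) k0 by (simp add: b_def a_def Rw_iff)
  moreover have "monomial_of b \<in> Poly_Mapping.keys P"
    using Min_in[OF S] by (auto simp: b_def S_def)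
  moreover have "Poly_Mapping.keys P \<subseteq> (\<lambda>s. monomial_of (line_point c b (int s))) ` {..N}"
  proof
    fix k assume "k \<in> Poly_Mapping.keys P"
    then obtain s where "s \<in> S" "k = monomial_of (line_point c a s)"
      using keys by blast
    moreover from this have "Min S \<le> s" "s \<le> Max S"
      using S by simp_all
    ultimately show "k \<in> (\<lambda>s. monomial_of (line_point c b (int s))) ` {..N}"
      by (intro image_eqI[of _ _ "nat (s - Min S)"]) (auto simp: b_def N_def)
  qed
  ultimately show ?thesis
    using that by blast
qed

lemma Rw_line_poly_repr:
  assumes "P \<in> Rw xi v" "P \<noteq> 0"
  obtains b p where "P = line_poly c b p" "line_admissible c b p" "coeff p 0 \<noteq> 0" "omega xi b = v"
proof -
  obtain b N where b: "nonneg_vec b" "nonneg_vec (line_point c b (int N))" "omega xi b = v"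
    "monomial_of b \<in> Poly_Mapping.keys P"
    and keys: "Poly_Mapping.keys P \<subseteq> (\<lambda>s. monomial_of (line_point c b (int s))) ` {..N}"
    using Rw_keys_on_segment[OF assms] by blast
  define m where "m s = monomial_of (line_point c b (int s))" for s
  define p where "p = (\<Sum>s\<le>N. monom (Poly_Mapping.lookup P (m s)) s)"
  have coeff_p: "coeff p s = (if s \<le> N then Poly_Mapping.lookup P (m s) else 0)" for s
    by (simp add: p_def coeff_sum coeff_monom)
  have deg: "degree p \<le> N"
    by (rule degree_le) (simp add: coeff_p)
  have nonneg: "nonneg_vec (line_point c b (int s))" if "s \<le> N" for s
    by (rule nonneg_line_point_between[OF b(1,2)]) (use that in auto)
  have "inj_on m {..N}"
  proof (rule inj_onI)
    fix s t assume st: "s \<in> {..N}" "t \<in> {..N}" "m s = m t"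
    then have "nonneg_vec (line_point c b (int s))" "nonneg_vec (line_point c b (int t))"
      using nonneg by auto
    then have "line_point c b (int s) = line_point c b (int t)"
      using monomial_of_inj st(3) unfolding m_def by blast
    then have "int s = int t"
      by (rule line_point_inj)
    then show "s = t"
      by simp
  qed
  have "line_poly c b p = (\<Sum>s\<le>N. Poly_Mapping.single (m s) (Poly_Mapping.lookup P (m s)))"
    by (simp add: line_poly_eq_sum[OF deg] coeff_p m_def)
  also have "\<dots> = (\<Sum>k\<in>m ` {..N}. Poly_Mapping.single k (Poly_Mapping.lookup P k))"
    by (simp add: sum.reindex[OF \<open>inj_on m {..N}\<close>])
  also have "\<dots> = (\<Sum>k\<in>Poly_Mapping.keys P. Poly_Mapping.single k (Poly_Mapping.lookup P k))"
    using keys by (intro sum.mono_neutral_right) (auto simp: m_def in_keys_iff)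
  finally have "P = line_poly c b p"
    by (simp add: sum_single_lookup)
  moreover have "line_admissible c b p"
    using b(1,2) deg by (rule line_admissibleI)
  moreover have "coeff p 0 \<noteq> 0"
    using b(4) by (simp add: coeff_p m_def in_keys_iff)
  ultimately show ?thesis
    using that b(3) by blast
qed

lemma common_base:
  assumes "omega xi a = omega xi b" "nonneg_vec a" "nonneg_vec b"
  obtains \<rho> k l where "nonneg_vec \<rho>" "a = line_point c \<rho> (int k)" "b = line_point c \<rho> (int l)"
proof -
  obtain s where s: "b = line_point c a s"
    using assms(1) omega_eq_iff by blast
  show ?thesis
  proof (cases "0 \<le> s")
    case True
    with s assms(2) show ?thesis
      by (intro that[of a 0 "nat s"]) simp_all
  next
    case False
    with s assms(3) show ?thesis
      by (intro that[of b "nat (- s)" 0]) simp_all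
  qed
qed

lemma monomial_free_repr:
  fixes G :: "('n, 'a::field) mpoly"
  assumes "G \<in> Rw xi w" and monomial_free: "\<not> (\<exists>m. m \<noteq> 0 \<and> Poly_Mapping.single m 1 dvd G)"
  obtains g where "G = line_poly c (low_corner c (degree g)) g" "coeff g 0 \<noteq> 0"
    "omega xi (low_corner c (degree g)) = w"
proof -
  have "G \<noteq> 0"
    using monomial_free by (metis dvd_0_right lookup_single_eq lookup_zero one_neq_zero)
  then obtain b g where G: "G = line_poly c b g" "line_admissible c b g" "coeff g 0 \<noteq> 0"
    "omega xi b = w"
    by (rule Rw_line_poly_repr[OF assms(1)])
  have "g \<noteq> 0"
    using G(3) by auto
  have "Poly_Mapping.single (monomial_of (segment_min c b (degree g))) 1 dvd G"
    unfolding G(1) line_poly_monomial_factor[OF G(2) \<open>g \<noteq> 0\<close>] by simp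
  then have "monomial_of (segment_min c b (degree g)) = 0"
    using monomial_free by blast
  then have "segment_min c b (degree g) = (\<lambda>_. 0)"
    using nonneg_segment_min[OF G(2) \<open>g \<noteq> 0\<close>] monomial_of_inj[of _ "\<lambda>_. 0"]
    by (simp add: nonneg_vec_def)
  then have "b = low_corner c (degree g)"
    by (rule low_corner_if_segment_min_eq_0)
  with G show ?thesis
    by (intro that[of g]) simp_all
qed

lemma coprime_line_poly:
  fixes g h :: "'a::field poly"
  assumes "mp_coprime (line_poly c (low_corner c (degree g)) g) (line_poly c \<gamma> h)"
    and "line_admissible c \<gamma> h" "g \<noteq> 0"
  shows "coprime g h"
proof (rule coprimeI)
  fix f assume "f dvd g" "f dvd h"
  then obtain g' h' where g: "g = f * g'" and h: "h = f * h'"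
    by (meson dvdE)
  have "f \<noteq> 0" "g' \<noteq> 0"
    using g assms(3) by auto
  define F where "F = line_poly c (low_corner c (degree f)) f"
  have adm_F: "line_admissible c (low_corner c (degree f)) f"
    by (rule line_admissible_low_corner) simp
  have "F * line_poly c (low_corner c (degree g')) g' = line_poly c (low_corner c (degree g)) g"
    using \<open>f \<noteq> 0\<close> \<open>g' \<noteq> 0\<close>
    by (simp add: F_def line_poly_mult[OF adm_F line_admissible_low_corner] g degree_mult_eq
        low_corner_add)
  moreover have "F * line_poly c (\<lambda>j. \<gamma> j - low_corner c (degree f) j) h' = line_poly c \<gamma> h"
    using assms(2) \<open>f \<noteq> 0\<close> unfolding h F_def
    by (simp add: line_poly_mult[OF adm_F line_admissible_factor])
  ultimately have "F dvd 1"
    using assms(1) unfolding mp_coprime_def by (metis dvd_triv_left)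
  then have "degree f = 0"
    using degree_eq_0_if_line_poly_dvd_one[OF adm_F \<open>f \<noteq> 0\<close>] by (simp add: F_def)
  with \<open>f \<noteq> 0\<close> show "is_unit f"
    by (simp add: is_unit_iff_degree)
qed

lemma line_poly_combination:
  fixes g h q :: "'a::field poly"
  assumes coprime: "coprime g h" and g0: "coeff g 0 \<noteq> 0"
    and H: "line_admissible c \<gamma> h" "h \<noteq> 0"
    and X: "line_admissible c \<gamma>X q" "q \<noteq> 0"
    and \<beta>: "nonneg_vec \<beta>" "nonneg_vec (line_point c \<beta> (int (degree g - 1)))"
    and fibre: "omega xi \<gamma>X = omega xi (\<lambda>j. \<gamma> j + \<beta> j)"
  shows "\<exists>A B. A \<in> Rw xi (\<lambda>k. omega xi \<gamma>X k - omega xi (low_corner c (degree g)) k)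
    \<and> B \<in> Rw xi (omega xi \<beta>)
    \<and> line_poly c \<gamma>X q = line_poly c (low_corner c (degree g)) g * A + line_poly c \<gamma> h * B"
proof -
  have "g \<noteq> 0"
    using g0 by auto
  have \<gamma>: "nonneg_vec \<gamma>" "nonneg_vec (line_point c \<gamma> (int (degree h)))"
    and \<gamma>X: "nonneg_vec \<gamma>X" "nonneg_vec (line_point c \<gamma>X (int (degree q)))"
    using line_admissibleD[OF H] line_admissibleD[OF X] by simp_all
  then have "nonneg_vec (\<lambda>j. \<gamma> j + \<beta> j)"
    using \<beta>(1) by (simp add: nonneg_vec_def)
  then obtain \<rho> k l where \<rho>: "nonneg_vec \<rho>" "\<gamma>X = line_point c \<rho> (int k)"
    "(\<lambda>j. \<gamma> j + \<beta> j) = line_point c \<rho> (int l)"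
    by (rule common_base[OF fibre \<gamma>X(1)])
  \<comment> \<open>\<open>\<rho> + N c\<close> is the upper end of the segment carrying either \<open>X\<close> or \<open>H B\<close>.\<close>
  define N where "N = max (k + degree q) (l + degree h + (degree g - 1))"
  have "line_point c \<rho> (int (l + degree h + (degree g - 1)))
      = (\<lambda>j. line_point c \<gamma> (int (degree h)) j + line_point c \<beta> (int (degree g - 1)) j)"
    using \<rho>(3) by (simp add: line_point_def fun_eq_iff algebra_simps)
  then have \<rho>N: "nonneg_vec (line_point c \<rho> (int N))"
    using \<gamma>(2) \<gamma>X(2) \<beta>(2) by (simp add: N_def max_def \<rho>(2) nonneg_vec_def add.commute)
  obtain a b where ab: "monom 1 k * q = g * a + monom 1 l * h * b"
    "degree (g * a) \<le> N" "degree b \<le> degree g - 1"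
    unfolding N_def by (rule bezout_shifted[OF coprime g0 H(2) X(2)])
  define A where "A = line_poly c (\<lambda>j. \<rho> j - low_corner c (degree g) j) a"
  define B where "B = line_poly c \<beta> b"
  have adm_A: "line_admissible c (\<lambda>j. \<rho> j - low_corner c (degree g) j) a"
    using line_admissible_factor[OF line_admissibleI[OF \<rho>(1) \<rho>N ab(2)] \<open>g \<noteq> 0\<close>] .
  have adm_B: "line_admissible c \<beta> b"
    using line_admissibleI[OF \<beta> ab(3)] .
  have "line_poly c \<gamma>X q = line_poly c (low_corner c (degree g)) g * A + line_poly c \<gamma> h * B"
    unfolding \<rho>(2) A_def B_def by (rule line_poly_bezout_identity[OF ab(1) adm_A H(1) adm_B \<rho>(3)])
  moreover have "A \<in> Rw xi (\<lambda>k. omega xi \<gamma>X k - omega xi (low_corner c (degree g)) k)"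
    using line_poly_in_Rw[OF adm_A] by (simp add: A_def omega_diff \<rho>(2))
  moreover have "B \<in> Rw xi (omega xi \<beta>)"
    using line_poly_in_Rw[OF adm_B] by (simp add: B_def)
  ultimately show ?thesis
    by blast
qed

lemma combination_exists_pos_degree:
  fixes G H X :: "('n, 'a::field) mpoly" and \<tau> :: real
  assumes G: "G = line_poly c (low_corner c (degree g)) g" "coeff g 0 \<noteq> 0" "0 < degree g"
      "omega xi (low_corner c (degree g)) = w"
    and H: "H \<in> Rw xi z" and coprime: "mp_coprime G H"
    and \<alpha>: "omega xi \<alpha> = i" "\<forall>j. 0 \<le> \<alpha> j + \<tau> * c j"
    and X: "X \<in> Rw xi (\<lambda>j. w j + z j + i j)" "X \<noteq> 0"
  shows "\<exists>A B. A \<in> Rw xi (\<lambda>j. z j + i j) \<and> B \<in> Rw xi (\<lambda>j. w j + i j) \<and> X = G * A + H * B"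
proof -
  have adm_G: "line_admissible c (low_corner c (degree g)) g"
    by (rule line_admissible_low_corner) simp
  have "g \<noteq> 0"
    using G(2) by auto
  have "\<not> G dvd 1"
    using degree_eq_0_if_line_poly_dvd_one[OF adm_G \<open>g \<noteq> 0\<close>] G(1,3) by auto
  then have "H \<noteq> 0"
    using coprime by (auto simp: mp_coprime_def)
  then obtain \<gamma> h where Hr: "H = line_poly c \<gamma> h" "line_admissible c \<gamma> h" "coeff h 0 \<noteq> 0"
    "omega xi \<gamma> = z"
    by (rule Rw_line_poly_repr[OF H])
  obtain \<gamma>X q where Xr: "X = line_poly c \<gamma>X q" "line_admissible c \<gamma>X q" "coeff q 0 \<noteq> 0"
    "omega xi \<gamma>X = (\<lambda>j. w j + z j + i j)"
    by (rule Rw_line_poly_repr[OF X])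
  define \<beta> where "\<beta> = line_point c (\<lambda>j. \<alpha> j + low_corner c (degree g) j) \<lceil>\<tau>\<rceil>"
  have \<beta>: "nonneg_vec \<beta>" "nonneg_vec (line_point c \<beta> (int (degree g - 1)))"
    using nonneg_ceiling_shift[OF \<alpha>(2), of "degree g"] G(3) by (simp_all add: \<beta>_def)
  have \<beta>_fibre: "omega xi \<beta> = (\<lambda>j. w j + i j)"
    by (simp add: \<beta>_def omega_add G(4) \<alpha>(1) fun_eq_iff add.commute)
  have "coprime g h"
    using coprime_line_poly[OF _ Hr(2) \<open>g \<noteq> 0\<close>] coprime G(1) Hr(1) by simp
  moreover have "omega xi \<gamma>X = omega xi (\<lambda>j. \<gamma> j + \<beta> j)"
    by (simp add: Xr(4) omega_add Hr(4) \<beta>_fibre fun_eq_iff algebra_simps)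
  moreover have "h \<noteq> 0" "q \<noteq> 0"
    using Hr(3) Xr(3) by auto
  ultimately obtain A B where "A \<in> Rw xi (\<lambda>k. omega xi \<gamma>X k - omega xi (low_corner c (degree g)) k)"
    "B \<in> Rw xi (omega xi \<beta>)" "X = G * A + H * B"
    using line_poly_combination[OF _ G(2) Hr(2) _ Xr(2) _ \<beta>] unfolding G(1) Hr(1) Xr(1) by blast
  moreover have "(\<lambda>k. omega xi \<gamma>X k - omega xi (low_corner c (degree g)) k) = (\<lambda>j. z j + i j)"
    by (simp add: Xr(4) G(4))
  ultimately show ?thesis
    using \<beta>_fibre by auto
qed

theorem combination_set_eq_Rw:
  fixes G H :: "('n, 'a::field) mpoly" and \<tau> :: real
  assumes G: "G \<in> Rw xi w" and H: "H \<in> Rw xi z" and coprime: "mp_coprime G H"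
    and monomial_free: "\<not> (\<exists>m. m \<noteq> 0 \<and> Poly_Mapping.single m 1 dvd G)"
    and \<alpha>: "omega xi \<alpha> = i" "\<forall>j. 0 \<le> \<alpha> j + \<tau> * c j"
  shows "{G * A + H * B | A B. A \<in> Rw xi (\<lambda>j. z j + i j) \<and> B \<in> Rw xi (\<lambda>j. w j + i j)}
    = Rw xi (\<lambda>j. w j + z j + i j)"
proof (intro set_eqI iffI)
  fix X :: "('n, 'a) mpoly" assume "X \<in> {G * A + H * B | A B. A \<in> Rw xi (\<lambda>j. z j + i j) \<and> B \<in> Rw xi (\<lambda>j. w j + i j)}"
  then show "X \<in> Rw xi (\<lambda>j. w j + z j + i j)"
    using combination_in_Rw[OF G H] by blast
next
  fix X :: "('n, 'a) mpoly" assume X: "X \<in> Rw xi (\<lambda>j. w j + z j + i j)"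
  obtain g where g: "G = line_poly c (low_corner c (degree g)) g" "coeff g 0 \<noteq> 0"
    "omega xi (low_corner c (degree g)) = w"
    by (rule monomial_free_repr[OF G monomial_free])
  consider "X = 0" | "degree g = 0" | "X \<noteq> 0" "0 < degree g"
    by blast
  then have "\<exists>A B. A \<in> Rw xi (\<lambda>j. z j + i j) \<and> B \<in> Rw xi (\<lambda>j. w j + i j) \<and> X = G * A + H * B"
  proof cases
    case 1
    then have "X = G * 0 + H * 0"
      by simp
    then show ?thesis
      using Rw_zero by blast
  next
    case 2
    then have "G = Poly_Mapping.single 0 (coeff g 0)"
      using g(1) by (simp add: line_poly_def low_corner_def)
    then show ?thesis
      using combination_exists_unit g(2) G X by blast
  next
    case 3
    then show ?thesis
      using combination_exists_pos_degree[OF g(1,2) _ g(3) H coprime \<alpha> X] by blast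
  qed
  then show "X \<in> {G * A + H * B | A B. A \<in> Rw xi (\<lambda>j. z j + i j) \<and> B \<in> Rw xi (\<lambda>j. w j + i j)}"
    by blast
qed
end

lemma realvec_nth [simp]: "realvec a $ j = real_of_int (a j)"
  by (simp add: realvec_def)

lemma realvec_inner: "realvec a \<bullet> realvec b = real_of_int (idot a b)"
  by (simp add: inner_vec_def idot_def realvec_def)

lemma realvec_uminus: "realvec (\<lambda>j. - a j) = - realvec a"
  by (simp add: vec_eq_iff)

lemma realvec_eq_0_iff: "realvec a = 0 \<longleftrightarrow> a = (\<lambda>_. 0)"
  by (simp add: vec_eq_iff fun_eq_iff)

lemma lin_indep_family_imp_independent:
  fixes xi :: "nat \<Rightarrow> 'n::finite \<Rightarrow> int"
  assumes "lin_indep_family m xi"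
  shows "inj_on (\<lambda>i. realvec (xi i)) {..<m}" and "independent ((\<lambda>i. realvec (xi i)) ` {..<m})"
proof -
  let ?f = "\<lambda>i. realvec (xi i)"
  show inj: "inj_on ?f {..<m}"
  proof (rule inj_onI, rule ccontr)
    fix i j assume ij: "i \<in> {..<m}" "j \<in> {..<m}" "?f i = ?f j" "i \<noteq> j"
    define r where "r k = (if k = i then 1 else if k = j then -1 else 0 :: real)" for k
    have "(\<Sum>k<m. r k *\<^sub>R ?f k) = (\<Sum>k\<in>{i, j}. r k *\<^sub>R ?f k)"
      by (rule sum.mono_neutral_right) (use ij in \<open>auto simp: r_def\<close>)
    also have "\<dots> = 0"
      using ij by (simp add: r_def)
    finally have "r i = 0"
      using assms ij(1) unfolding lin_indep_family_def by blast
    then show False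
      by (simp add: r_def)
  qed
  show "independent (?f ` {..<m})"
  proof (rule independent_if_scalars_zero)
    fix u x assume "(\<Sum>x\<in>?f ` {..<m}. u x *\<^sub>R x) = 0" "x \<in> ?f ` {..<m}"
    then show "u x = 0"
      using assms unfolding lin_indep_family_def sum.reindex[OF inj] by auto
  qed simp
qed

lemma kernel_real_line:
  fixes xi :: "nat \<Rightarrow> 'n::finite \<Rightarrow> int"
  assumes li: "lin_indep_family (CARD('n) - 1) xi"
    and c: "\<forall>i<CARD('n) - 1. idot (xi i) c = 0" "c \<noteq> (\<lambda>_. 0)"
    and v: "\<forall>i<CARD('n) - 1. idot (xi i) v = 0"
  obtains r where "realvec v = r *\<^sub>R realvec c"
proof -
  let ?S = "(\<lambda>i. realvec (xi i)) ` {..<CARD('n) - 1}"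
  let ?W = "{y \<in> UNIV. \<forall>x\<in>span ?S. orthogonal x y}"
  have "dim ?W + dim (span ?S) = dim (UNIV :: (real^'n) set)"
    by (rule dim_subspace_orthogonal_to_vectors) (simp_all add: subspace_span)
  moreover have "dim (span ?S) = CARD('n) - 1"
    using lin_indep_family_imp_independent[OF li] by (simp add: dim_eq_card_independent card_image)
  ultimately have "dim ?W + (CARD('n) - 1) = CARD('n)"
    by simp
  moreover have "0 < CARD('n)"
    by simp
  ultimately have dim_W: "dim ?W = 1"
    by arith
  have in_W: "realvec u \<in> ?W" if "\<forall>i<CARD('n) - 1. idot (xi i) u = 0" for u
  proof -
    have "orthogonal (realvec u) y" if "y \<in> ?S" for y
      using that \<open>\<forall>i<CARD('n) - 1. idot (xi i) u = 0\<close>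
      by (auto simp: orthogonal_def realvec_inner idot_def mult.commute)
    then have "orthogonal (realvec u) x" if "x \<in> span ?S" for x
      using that orthogonal_to_span by blast
    then show ?thesis
      by (simp add: orthogonal_commute)
  qed
  have "realvec c \<noteq> 0"
    using c(2) by (simp add: realvec_eq_0_iff)
  then have "?W \<subseteq> span {realvec c}"
    using card_eq_dim[of "{realvec c}" ?W] in_W[OF c(1)] dim_W by simp
  with in_W[OF v] show ?thesis
    using that by (auto simp: span_singleton)
qed

lemma primitive_vec_real_multiple:
  fixes v c :: "'n::finite \<Rightarrow> int"
  assumes prim: "primitive_vec c" and eq: "realvec v = r *\<^sub>R realvec c"
  obtains s where "v = (\<lambda>j. s * c j)"
proof -
  obtain j0 where j0: "c j0 \<noteq> 0"
    using prim by (auto simp: primitive_vec_def fun_eq_iff)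
  have vj: "real_of_int (v j) = r * real_of_int (c j)" for j
    using arg_cong[OF eq, of "\<lambda>x. x $ j"] by simp
  define \<rho> where "\<rho> = (of_int (v j0) / of_int (c j0) :: rat)"
  have "r = of_rat \<rho>"
    using vj[of j0] j0 by (simp add: \<rho>_def of_rat_divide)
  then have v\<rho>: "of_int (v j) = \<rho> * of_int (c j)" for j
    using vj[of j] by (metis of_rat_eq_iff of_rat_mult of_rat_of_int_eq)
  obtain p q where pq: "quotient_of \<rho> = (p, q)"
    by (cases "quotient_of \<rho>")
  have q: "0 < q" "coprime q p" "\<rho> = of_int p / of_int q"
    using quotient_of_denom_pos[OF pq] quotient_of_coprime[OF pq] quotient_of_div[OF pq]
    by (simp_all add: coprime_commute)
  have vpq: "v j * q = p * c j" for j
  proof -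
    have "(of_int (v j * q) :: rat) = of_int (p * c j)"
      using v\<rho>[of j] q by (simp add: field_simps)
    then show ?thesis
      by (simp only: of_int_eq_iff)
  qed
  have "q dvd c j" for j
    using vpq[of j] q(2) by (metis coprime_dvd_mult_right_iff dvd_triv_right)
  then have "\<forall>j. c j = q * (c j div q)"
    by simp
  then have "\<bar>q\<bar> = 1"
    using prim[unfolded primitive_vec_def, THEN conjunct2, rule_format, of q "\<lambda>j. c j div q"] by blast
  with q(1) have "q = 1"
    by simp
  with vpq have "v = (\<lambda>j. p * c j)"
    by (simp add: fun_eq_iff)
  then show ?thesis
    by (rule that)
qed

lemma omega_eq_iff_line_point:
  fixes xi :: "nat \<Rightarrow> 'n::finite \<Rightarrow> int"
  assumes li: "lin_indep_family (CARD('n) - 1) xi"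
    and orth: "\<forall>i<CARD('n) - 1. idot (xi i) c = 0" and prim: "primitive_vec c"
  shows "omega xi a = omega xi b \<longleftrightarrow> (\<exists>s. b = line_point c a s)"
proof
  assume "omega xi a = omega xi b"
  then have "omega xi (\<lambda>j. b j - a j) = (\<lambda>_. 0)"
    by (simp add: omega_diff)
  then have "\<forall>i<CARD('n) - 1. idot (xi i) (\<lambda>j. b j - a j) = 0"
    unfolding omega_def by (metis (mono_tags, lifting))
  moreover have "c \<noteq> (\<lambda>_. 0)"
    using prim by (simp add: primitive_vec_def)
  ultimately obtain r where "realvec (\<lambda>j. b j - a j) = r *\<^sub>R realvec c"
    using kernel_real_line[OF li orth] by blast
  then obtain s where "(\<lambda>j. b j - a j) = (\<lambda>j. s * c j)"
    using primitive_vec_real_multiple[OF prim] by blast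
  then show "\<exists>s. b = line_point c a s"
    by (auto simp: line_point_def fun_eq_iff algebra_simps)
next
  assume "\<exists>s. b = line_point c a s"
  then show "omega xi a = omega xi b"
    using orth by (auto simp: omega_def idot_def line_point_def fun_eq_iff sum.distrib
        algebra_simps sum_distrib_left[symmetric])
qed

lemma omega_lines_exists:
  fixes xi :: "nat \<Rightarrow> 'n::finite \<Rightarrow> int"
  assumes "lin_indep_family (CARD('n) - 1) xi"
    and "\<forall>i<CARD('n) - 1. idot (xi i) c = 0" and prim: "primitive_vec c"
  obtains c' where "omega_lines c' xi" "c' = c \<or> c' = (\<lambda>j. - c j)"
proof -
  note lines = omega_eq_iff_line_point[OF assms]
  obtain j where "c j \<noteq> 0"
    using prim by (auto simp: primitive_vec_def fun_eq_iff)
  show ?thesis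
  proof (cases "0 < c j")
    case True
    then have "omega_lines c xi"
      using lines by unfold_locales blast+
    then show ?thesis
      using that by blast
  next
    case False
    have "line_point (\<lambda>j. - c j) a s = line_point c a (- s)" for a s
      by (simp add: line_point_def)
    have "omega_lines (\<lambda>j. - c j) xi"
    proof
      show "omega xi a = omega xi b \<longleftrightarrow> (\<exists>s. b = line_point (\<lambda>j. - c j) a s)" for a b
        using lines \<open>\<And>a s. line_point (\<lambda>j. - c j) a s = line_point c a (- s)\<close> by (metis minus_minus)
      show "\<exists>j. 0 < - c j"
        using False \<open>c j \<noteq> 0\<close> by (intro exI[of _ j]) simp
    qed
    then show ?thesis
      using that by blast
  qed
qed

lemma orth_to_if_orthogonal_direction:
  assumes "aff_dim E = 1" "parallel_to c E" "c \<noteq> (\<lambda>_. 0)" "\<xi> \<bullet> realvec c = 0"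
  shows "orth_to \<xi> E"
proof -
  obtain a b t where ab: "a \<in> E" "b \<in> E" "a \<noteq> b" "realvec c = t *\<^sub>R (b - a)"
    using assms(2) unfolding parallel_to_def by blast
  have "t \<noteq> 0"
    using ab(4) assms(3) by (auto simp: realvec_eq_0_iff[symmetric])
  then have \<xi>b: "\<xi> \<bullet> b = \<xi> \<bullet> a"
    using ab(4) assms(4) by (simp add: inner_diff_right)
  have "affine hull {a, b} \<subseteq> affine hull E"
    using ab(1,2) by (intro hull_mono) simp
  moreover have "aff_dim (affine hull {a, b}) = aff_dim (affine hull E)"
    using ab(3) assms(1) by simp
  ultimately have hull: "affine hull {a, b} = affine hull E"
    by (intro affine_dim_equal) (auto simp: affine_affine_hull)
  have "\<xi> \<bullet> x = \<xi> \<bullet> a" if "x \<in> E" for x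
  proof -
    have "x \<in> affine hull {a, b}"
      unfolding hull using that by (rule hull_inc)
    then obtain u v where "x = u *\<^sub>R a + v *\<^sub>R b" "u + v = 1"
      unfolding affine_hull_2 by blast
    then have "\<xi> \<bullet> x = u * (\<xi> \<bullet> a) + v * (\<xi> \<bullet> a)"
      using \<xi>b by (simp add: inner_add_right)
    also have "\<dots> = \<xi> \<bullet> a"
      using \<open>u + v = 1\<close> by (metis distrib_right mult_1)
    finally show ?thesis .
  qed
  then show ?thesis
    unfolding orth_to_def by (simp add: inner_diff_right)
qed

lemma cone_axis_pair:
  fixes c \<alpha> :: "'n::finite \<Rightarrow> int"
  assumes cone: "\<And>\<xi>. (\<forall>j. 0 \<le> \<xi> $ j) \<Longrightarrow> \<xi> \<bullet> realvec c = 0 \<Longrightarrow> 0 \<le> \<xi> \<bullet> realvec \<alpha>"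
    and "0 < c j0" "c j \<le> 0"
  shows "c j * \<alpha> j0 \<le> c j0 * \<alpha> j"
proof -
  define \<xi> :: "real^'n" where "\<xi> = (- c j) *\<^sub>R axis j0 1 + c j0 *\<^sub>R axis j 1"
  have "\<forall>k. 0 \<le> \<xi> $ k"
    using assms(2,3) by (simp add: \<xi>_def axis_def)
  moreover have "\<xi> \<bullet> realvec c = 0"
    by (simp add: \<xi>_def inner_add_left inner_diff_left inner_axis')
  ultimately have "0 \<le> \<xi> \<bullet> realvec \<alpha>"
    by (rule cone)
  then have "real_of_int (c j * \<alpha> j0) \<le> real_of_int (c j0 * \<alpha> j)"
    by (simp add: \<xi>_def inner_add_left inner_diff_left inner_axis' algebra_simps)
  then show ?thesis
    by (simp only: of_int_le_iff)
qed

lemma real_shift_nonneg_exists: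
  fixes c \<alpha> :: "'n::finite \<Rightarrow> int"
  assumes "\<exists>j. 0 < c j"
    and cone: "\<And>\<xi>. (\<forall>j. 0 \<le> \<xi> $ j) \<Longrightarrow> \<xi> \<bullet> realvec c = 0 \<Longrightarrow> 0 \<le> \<xi> \<bullet> realvec \<alpha>"
  obtains \<tau> :: real where "\<forall>j. 0 \<le> \<alpha> j + \<tau> * c j"
proof -
  define P where "P = {j. 0 < c j}"
  have P: "finite P" "P \<noteq> {}"
    using assms(1) by (auto simp: P_def)
  define f where "f j = - real_of_int (\<alpha> j) / real_of_int (c j)" for j
  define \<tau> where "\<tau> = Max (f ` P)"
  have "0 \<le> \<alpha> j + \<tau> * c j" for j
  proof (cases "0 < c j")
    case True
    then have "f j \<le> \<tau>"
      unfolding \<tau>_def using P by (intro Max_ge) (auto simp: P_def)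
    then have "f j * c j \<le> \<tau> * c j"
      using True by (simp add: mult_right_mono)
    moreover have "f j * c j = - \<alpha> j"
      using True by (simp add: f_def)
    ultimately show ?thesis
      by linarith
  next
    case False
    have "\<tau> \<in> f ` P"
      unfolding \<tau>_def using P by (intro Max_in) auto
    then obtain j0 where j0: "0 < c j0" "\<tau> = f j0"
      by (auto simp: P_def)
    have "real_of_int (c j * \<alpha> j0) \<le> real_of_int (c j0 * \<alpha> j)"
      using False j0(1) by (simp only: of_int_le_iff) (rule cone_axis_pair[OF cone], simp_all)
    moreover have "\<alpha> j + \<tau> * c j = (real_of_int (c j0) * \<alpha> j - real_of_int (c j) * \<alpha> j0) / c j0"
      using j0(1) by (simp add: j0(2) f_def field_simps)
    ultimately show ?thesis
      using j0(1) by simp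
  qed
  then show ?thesis
    using that by blast
qed

theorem lemma2p5:
  fixes D E :: "(real^'n::finite) set"
    and c :: "'n \<Rightarrow> int"
    and xi :: "nat \<Rightarrow> ('n \<Rightarrow> int)"
    and w z :: "nat \<Rightarrow> int"
    and G H :: "('n, 'a::field) mpoly"
  assumes "is_newton_polyhedron D"
    and "loose_edge D E"
    and "primitive_vec c" and "parallel_to c E"
    and "\<forall>i < CARD('n) - 1. \<forall>j. 0 \<le> xi i j"
    and "lin_indep_family (CARD('n) - 1) xi"
    and "\<forall>i < CARD('n) - 1. idot (xi i) c = 0"
    and "nonneg_wvec TYPE('n) w" and "nonneg_wvec TYPE('n) z"
    and "G \<in> Rw xi w" and "H \<in> Rw xi z"
    and "mp_coprime G H"
    and "\<not> (\<exists>m. m \<noteq> 0 \<and> Poly_Mapping.single m (1::'a) dvd G)"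
    and "i \<in> Mset xi E"
  shows "{G * A + H * B | A B. A \<in> Rw xi (\<lambda>j. z j + i j) \<and> B \<in> Rw xi (\<lambda>j. w j + i j)}
         = Rw xi (\<lambda>j. w j + z j + i j)"
proof -
  obtain \<alpha> where \<alpha>: "omega xi \<alpha> = i"
    and cone: "\<forall>\<xi>::real^'n. (\<forall>j. 0 \<le> \<xi> $ j) \<and> orth_to \<xi> E \<longrightarrow> 0 \<le> \<xi> \<bullet> realvec \<alpha>"
    using assms(14) unfolding Mset_def by blast
  obtain c' where lines: "omega_lines c' xi" and c': "c' = c \<or> c' = (\<lambda>j. - c j)"
    using omega_lines_exists[OF assms(6,7,3)] by blast
  have edge: "aff_dim E = 1" and "c \<noteq> (\<lambda>_. 0)"
    using assms(2,3) by (simp_all add: loose_edge_def primitive_vec_def)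
  have cone': "0 \<le> \<xi> \<bullet> realvec \<alpha>" if "\<forall>j. 0 \<le> \<xi> $ j" "\<xi> \<bullet> realvec c' = 0" for \<xi>
  proof -
    have "\<xi> \<bullet> realvec c = 0"
      using that(2) c' by (auto simp: realvec_uminus)
    then have "orth_to \<xi> E"
      by (rule orth_to_if_orthogonal_direction[OF edge assms(4) \<open>c \<noteq> (\<lambda>_. 0)\<close>])
    then show ?thesis
      using cone that(1) by blast
  qed
  obtain \<tau> :: real where \<tau>: "\<forall>j. 0 \<le> \<alpha> j + \<tau> * c' j"
    using real_shift_nonneg_exists[OF omega_lines.positive_entry[OF lines] cone'] by blast
  show ?thesis
    by (rule omega_lines.combination_set_eq_Rw[OF lines assms(10-13) \<alpha> \<tau>])
qed

end
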